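(* Let $g:\mathbb{R}^3\to\mathbb{R}$ be nonnegative with $\int_{\mathbb{R}^3} g(v)\,dv=1$. Then for every $r>0$ there exists $C_r\in(0,\frac12)$ such that for all $\theta\in\mathbb{R}$ and all $\xi\in\mathbb{R}^3$ with $|\xi|>r$, $$\int_{\mathbb{R}^3} g(v)\sin^2\Big(\frac{v\cdot\xi+\theta}{2}\Big)dv\geq C_r.$$ *)

theory Defs
  imports "HOL-Analysis.Analysis"
begin

end

theory Submission
  imports Defs
begin

text \<open>
  Where \<open>cos (v \<bullet> \<xi> + \<theta>) \<le> cos \<eta>\<close> we have \<open>sin\<^sup>2 ((v \<bullet> \<xi> + \<theta>) / 2) \<ge> (1 - cos \<eta>) / 2\<close>,
  so it suffices to show that for small \<open>\<eta>\<close> at most half of the mass of \<open>g\<close> lies in the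
  complementary set, uniformly in \<open>\<theta>\<close> and \<open>|\<xi>| > r\<close>. That set is a union of parallel slabs
  of width \<open>2\<eta>/|\<xi>|\<close> with period \<open>2\<pi>/|\<xi>|\<close>; averaging over the translates by
  \<open>t \<xi> / |\<xi>|\<^sup>2\<close>, \<open>t \<in> [0, 2\<pi>]\<close>, shows that its part inside a ball of radius \<open>R\<close> has
  measure at most \<open>(2\<eta>/\<pi>) |B(R + 2\<pi>/r)|\<close>. Since \<open>g\<close> is integrable, its mass on a set \<open>A\<close> is
  small once \<open>A \<inter> B(R)\<close> has small measure for a suitable \<open>R\<close> (compare \<open>g\<close> with its
  truncation \<open>min g (N \<cdot> 1\<^bsub>B(N)\<^esub>)\<close>).
\<close>

lemma cos_gt_imp_near_multiple_2pi:
  fixes x \<eta> :: real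
  assumes "0 < \<eta>" "\<eta> \<le> pi" "cos \<eta> < cos x"
  obtains m :: int where "\<bar>x - 2*pi*m\<bar> < \<eta>"
proof -
  define m where "m = round (x / (2*pi))"
  have "x - 2*pi*m = 2*pi * (x / (2*pi) - m)"
    by (simp add: field_simps)
  then have "\<bar>x - 2*pi*m\<bar> = 2*pi * \<bar>x / (2*pi) - m\<bar>"
    by (simp add: abs_mult)
  also have "\<dots> \<le> 2*pi * (1/2)"
    using of_int_round_abs_le[of "x / (2*pi)"] unfolding m_def
    by (intro mult_left_mono) (auto simp: abs_minus_commute)
  finally have le_pi: "\<bar>x - 2*pi*m\<bar> \<le> pi" by simp
  have "cos \<eta> < cos \<bar>x - 2*pi*m\<bar>"
    using assms(3) by (simp add: cos_diff)
  with assms le_pi have "\<bar>x - 2*pi*m\<bar> < \<eta>"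
    using cos_mono_less_eq[of \<eta> "\<bar>x - 2*pi*m\<bar>"] by argo
  then show thesis by (rule that)
qed

lemma emeasure_cos_gt_on_period_le:
  fixes c \<eta> :: real
  assumes "0 < \<eta>" "\<eta> < pi"
  shows "emeasure lborel {t \<in> {0..2*pi}. cos \<eta> < cos (c + t)} \<le> ennreal (4*\<eta>)"
proof -
  \<comment> \<open>only the multiples \<open>2\<pi>k\<close> and \<open>2\<pi>(k + 1)\<close> of \<open>2\<pi>\<close> lie within \<open>\<eta>\<close> of \<open>[c, c + 2\<pi>]\<close>\<close>
  define k where "k = \<lfloor>(c - \<eta>) / (2*pi)\<rfloor> + 1"
  define I where "I j = {2*pi*(k + j) - c - \<eta> <..< 2*pi*(k + j) - c + \<eta>}" for j :: int
  have "{t \<in> {0..2*pi}. cos \<eta> < cos (c + t)} \<subseteq> I 0 \<union> I 1"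
  proof
    fix t assume "t \<in> {t \<in> {0..2*pi}. cos \<eta> < cos (c + t)}"
    then have t: "0 \<le> t" "t \<le> 2*pi" "cos \<eta> < cos (c + t)" by auto
    obtain m :: int where m: "\<bar>c + t - 2*pi*m\<bar> < \<eta>"
      using cos_gt_imp_near_multiple_2pi[OF assms(1) _ t(3)] assms(2) by auto
    have "(c - \<eta>) / (2*pi) < m" "m < (c - \<eta>) / (2*pi) + 2"
      using m t assms by (auto simp: field_simps abs_less_iff)
    then have "m = k \<or> m = k + 1" unfolding k_def by linarith
    with m show "t \<in> I 0 \<union> I 1" by (auto simp: I_def abs_less_iff)
  qed
  then have "emeasure lborel {t \<in> {0..2*pi}. cos \<eta> < cos (c + t)} \<le> emeasure lborel (I 0 \<union> I 1)"
    by (rule emeasure_mono) (simp add: I_def)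
  also have "\<dots> \<le> emeasure lborel (I 0) + emeasure lborel (I 1)"
    by (rule emeasure_subadditive) (auto simp: I_def)
  also have "\<dots> = ennreal (4*\<eta>)"
    using assms by (simp add: I_def ennreal_plus[symmetric])
  finally show ?thesis .
qed

lemma emeasure_lborel_le_translated_superset:
  fixes A B :: "'a::euclidean_space set"
  assumes "A \<in> sets borel" "B \<in> sets borel" "(+) a ` A \<subseteq> B"
  shows "emeasure lborel A \<le> emeasure lborel B"
proof -
  have "emeasure lborel A = emeasure lebesgue ((+) a ` A)"
    using emeasure_lebesgue_affine[of 1 a A] assms(1) by (simp add: add.commute)
  also have "\<dots> \<le> emeasure lebesgue B"
    using assms by (intro emeasure_mono) auto
  also have "\<dots> = emeasure lborel B"
    using assms(2) by simp
  finally show ?thesis .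
qed

lemma emeasure_cos_gt_cball_le_phase_shift:
  fixes \<xi> :: "'a::euclidean_space"
  assumes "0 < r" "r \<le> norm \<xi>" "0 \<le> t" "t \<le> 2*pi"
  shows "emeasure lborel ({v. cos \<eta> < cos (v \<bullet> \<xi> + \<theta>)} \<inter> cball 0 R)
         \<le> emeasure lborel ({v. cos \<eta> < cos (v \<bullet> \<xi> + \<theta> + t)} \<inter> cball 0 (R + 2*pi/r))"
proof (rule emeasure_lborel_le_translated_superset)
  define h where "h = (t / (\<xi> \<bullet> \<xi>)) *\<^sub>R \<xi>"
  have \<xi>: "0 < norm \<xi>" using assms by linarith
  then have h_\<xi>: "h \<bullet> \<xi> = t" by (simp add: h_def)
  have "norm h = t / norm \<xi>"
    using \<xi> assms by (simp add: h_def power2_norm_eq_inner[symmetric] power2_eq_square)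
  also have "\<dots> \<le> 2*pi / r"
    using assms by (intro frac_le) auto
  finally have "norm h \<le> 2*pi / r" .
  then have "norm (v - h) \<le> R + 2*pi/r" if "norm v \<le> R" for v
    using that norm_triangle_ineq4[of v h] by auto
  then show "(+) (-h) ` ({v. cos \<eta> < cos (v \<bullet> \<xi> + \<theta>)} \<inter> cball 0 R)
      \<subseteq> {v. cos \<eta> < cos (v \<bullet> \<xi> + \<theta> + t)} \<inter> cball 0 (R + 2*pi/r)"
    by (auto simp: h_\<xi> inner_diff_left)
qed (measurable, measurable)

lemma emeasure_cos_gt_cball_le:
  fixes \<xi> :: "'a::euclidean_space"
  assumes "0 < \<eta>" "\<eta> < pi" "0 < r" "r \<le> norm \<xi>"
  shows "emeasure lborel ({v. cos \<eta> < cos (v \<bullet> \<xi> + \<theta>)} \<inter> cball 0 R) * ennreal (2*pi)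
         \<le> ennreal (4*\<eta>) * emeasure lborel (cball (0::'a) (R + 2*pi/r))"
proof -
  define A where "A = {v. cos \<eta> < cos (v \<bullet> \<xi> + \<theta>)} \<inter> cball 0 R"
  define B where "B = cball (0::'a) (R + 2*pi/r)"
  define S where "S = {(v, t). v \<in> B \<and> t \<in> {0..2*pi} \<and> cos \<eta> < cos (v \<bullet> \<xi> + \<theta> + t)}"
  have [measurable]: "B \<in> sets borel"
    unfolding B_def by measurable
  have S_eq: "S = (B \<times> {0..2*pi}) \<inter> {p. cos \<eta> < cos (fst p \<bullet> \<xi> + \<theta> + snd p)}"
    by (auto simp: S_def)
  moreover have "open {p :: 'a \<times> real. cos \<eta> < cos (fst p \<bullet> \<xi> + \<theta> + snd p)}"
    by (intro open_Collect_less continuous_intros)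
  moreover have "closed (B \<times> {0..2*pi})"
    by (simp add: B_def closed_Times)
  ultimately have "S \<in> sets borel"
    unfolding S_eq by (intro sets.Int borel_closed borel_open)
  then have S_sets: "S \<in> sets (lborel \<Otimes>\<^sub>M lborel)"
    by (simp add: borel_prod[symmetric])
  have A_le_slice: "emeasure lborel A \<le> emeasure lborel ((\<lambda>v. (v, t)) -` S)"
    if "t \<in> {0..2*pi}" for t
  proof -
    have "(\<lambda>v. (v, t)) -` S = {v. cos \<eta> < cos (v \<bullet> \<xi> + \<theta> + t)} \<inter> B"
      using that by (auto simp: S_def)
    then show ?thesis
      using that emeasure_cos_gt_cball_le_phase_shift[OF assms(3,4), of t \<eta> \<theta> R]
      by (simp add: A_def B_def)
  qed
  have "emeasure lborel A * ennreal (2*pi) = (\<integral>\<^sup>+t. emeasure lborel A * indicator {0..2*pi} t \<partial>lborel)"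
    by (simp add: nn_integral_cmult_indicator)
  also have "\<dots> \<le> (\<integral>\<^sup>+t. emeasure lborel ((\<lambda>v. (v, t)) -` S) \<partial>lborel)"
    by (intro nn_integral_mono) (auto simp: indicator_def A_le_slice)
  also have "\<dots> = emeasure (lborel \<Otimes>\<^sub>M lborel) S"
    using S_sets by (rule lborel_pair.emeasure_pair_measure_alt2[symmetric])
  also have "\<dots> = (\<integral>\<^sup>+v. emeasure lborel (Pair v -` S) \<partial>lborel)"
    using S_sets by (rule lborel.emeasure_pair_measure_alt)
  also have "\<dots> \<le> (\<integral>\<^sup>+v. ennreal (4*\<eta>) * indicator B v \<partial>lborel)"
  proof (intro nn_integral_mono)
    fix v
    have "Pair v -` S = (if v \<in> B then {t \<in> {0..2*pi}. cos \<eta> < cos ((v \<bullet> \<xi> + \<theta>) + t)} else {})"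
      by (auto simp: S_def)
    then show "emeasure lborel (Pair v -` S) \<le> ennreal (4*\<eta>) * indicator B v"
      using emeasure_cos_gt_on_period_le[OF assms(1,2)] by simp
  qed
  also have "\<dots> = ennreal (4*\<eta>) * emeasure lborel B"
    by (simp add: nn_integral_cmult_indicator)
  finally show ?thesis
    unfolding A_def B_def .
qed

lemma integrable_truncation:
  fixes g :: "'a::euclidean_space \<Rightarrow> real"
  assumes "integrable lebesgue g"
  shows "integrable lebesgue (\<lambda>v. min (g v) (c * indicator (cball 0 R) v))"
proof -
  have "cball (0::'a) R \<in> sets lebesgue" by simp
  then have "integrable lebesgue (\<lambda>v. c * indicator (cball (0::'a) R) v :: real)"
    using emeasure_lborel_cball_finite[of "0::'a" R] by (intro integrable_mult_right) simp
  with assms show ?thesis by (rule integrable_min)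
qed

lemma integral_truncation_tendsto:
  fixes g :: "'a::euclidean_space \<Rightarrow> real"
  assumes "integrable lebesgue g"
  shows "(\<lambda>n. \<integral>v. min (g v) (real n * indicator (cball 0 (real n)) v) \<partial>lebesgue)
           \<longlonglongrightarrow> integral\<^sup>L lebesgue g"
proof (rule integral_dominated_convergence)
  show "g \<in> borel_measurable lebesgue" "integrable lebesgue (\<lambda>v. norm (g v))"
    using assms by auto
  show "(\<lambda>v. min (g v) (real n * indicator (cball 0 (real n)) v)) \<in> borel_measurable lebesgue" for n
    using integrable_truncation[OF assms] by auto
  show "AE v in lebesgue. norm (min (g v) (real n * indicator (cball 0 (real n)) v)) \<le> norm (g v)" for n
    by (auto simp: indicator_def)
  show "AE v in lebesgue. (\<lambda>n. min (g v) (real n * indicator (cball 0 (real n)) v)) \<longlonglongrightarrow> g v"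
  proof (rule AE_I2, rule tendsto_eventually)
    fix v :: 'a
    have "min (g v) (real n * indicator (cball 0 (real n)) v) = g v"
      if "max (g v) (norm v) \<le> real n" for n
      using that by (auto simp: indicator_def)
    then show "\<forall>\<^sub>F n in sequentially. min (g v) (real n * indicator (cball 0 (real n)) v) = g v"
      using eventually_ge_at_top[of "nat \<lceil>max (g v) (norm v)\<rceil>"]
      by (auto elim!: eventually_mono)
  qed
qed

lemma small_mass_on_locally_small_sets:
  fixes g :: "'a::euclidean_space \<Rightarrow> real"
  assumes nonneg: "\<And>v. 0 \<le> g v" and g: "integrable lebesgue g" and "0 < \<epsilon>"
  obtains R \<delta> :: real where "0 < \<delta>"
    "\<And>A. A \<in> sets lebesgue \<Longrightarrow> emeasure lebesgue (A \<inter> cball 0 R) < ennreal \<delta> \<Longrightarrow>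
       (\<integral>v. indicator A v * g v \<partial>lebesgue) < \<epsilon>"
proof -
  define h where "h n v = min (g v) (real n * indicator (cball 0 (real n)) v)" for n v
  have "\<forall>\<^sub>F n in sequentially. integral\<^sup>L lebesgue g - \<epsilon>/2 < integral\<^sup>L lebesgue (h n)"
    using integral_truncation_tendsto[OF g] \<open>0 < \<epsilon>\<close> unfolding h_def
    by (intro order_tendstoD(1)) auto
  then obtain N where "integral\<^sup>L lebesgue g - \<epsilon>/2 < integral\<^sup>L lebesgue (h N)"
    unfolding eventually_sequentially by blast
  then have N: "integral\<^sup>L lebesgue g - integral\<^sup>L lebesgue (h N) < \<epsilon>/2"
    by simp
  define \<delta> where "\<delta> = \<epsilon> / (2 * (real N + 1))"
  have "0 < \<delta>" using \<open>0 < \<epsilon>\<close> by (simp add: \<delta>_def)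
  moreover have "(\<integral>v. indicator A v * g v \<partial>lebesgue) < \<epsilon>"
    if A: "A \<in> sets lebesgue" and small: "emeasure lebesgue (A \<inter> cball 0 (real N)) < ennreal \<delta>" for A
  proof -
    let ?K = "A \<inter> cball 0 (real N)"
    have K: "?K \<in> sets lebesgue" "emeasure lebesgue ?K < \<infinity>"
      using A small by (auto simp: less_le_trans)
    then have "measure lebesgue ?K < \<delta>"
      using small by (simp add: emeasure_eq_ennreal_measure ennreal_less_iff)
    have h_integrable: "integrable lebesgue (h N)"
      unfolding h_def using g by (rule integrable_truncation)
    \<comment> \<open>\<open>h N\<close> is bounded by \<open>N\<close> on the ball and vanishes outside it, as \<open>g \<ge> 0\<close>\<close>
    have "indicator A v * g v \<le> (g v - h N v) + real N * indicator ?K v" for v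
      using nonneg[of v] by (auto simp: h_def indicator_def)
    then have "(\<integral>v. indicator A v * g v \<partial>lebesgue)
        \<le> (\<integral>v. (g v - h N v) + real N * indicator ?K v \<partial>lebesgue)"
      using integrable_real_mult_indicator[OF A g] K g h_integrable
      by (intro integral_mono) (auto simp: mult.commute)
    also have "\<dots> = integral\<^sup>L lebesgue g - integral\<^sup>L lebesgue (h N) + real N * measure lebesgue ?K"
      using K g h_integrable by simp
    also have "\<dots> < \<epsilon>/2 + real N * \<delta>"
      using N \<open>measure lebesgue ?K < \<delta>\<close> by (intro add_less_le_mono mult_left_mono) auto
    also have "\<dots> \<le> \<epsilon>"
      using \<open>0 < \<epsilon>\<close> by (simp add: \<delta>_def field_simps)
    finally show ?thesis .
  qed
  ultimately show thesis by (rule that)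
qed

lemma emeasure_cos_gt_cball_small:
  fixes R r \<delta> :: real
  assumes "0 < r" "0 < \<delta>"
  obtains \<eta> where "0 < \<eta>" "\<eta> \<le> pi/2"
    "\<And>(\<xi>::'a::euclidean_space) \<theta>. r \<le> norm \<xi> \<Longrightarrow>
       emeasure lebesgue ({v. cos \<eta> < cos (v \<bullet> \<xi> + \<theta>)} \<inter> cball 0 R) < ennreal \<delta>"
proof -
  define m where "m = measure lborel (cball (0::'a) (R + 2*pi/r))"
  have m: "emeasure lborel (cball (0::'a) (R + 2*pi/r)) = ennreal m" "0 \<le> m"
    using emeasure_lborel_cball_finite[of "0::'a" "R + 2*pi/r"]
    by (auto simp: m_def emeasure_eq_ennreal_measure)
  define \<eta> where "\<eta> = min (pi/2) (pi * \<delta> / (2 * (m + 1)))"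
  have \<eta>: "0 < \<eta>" "\<eta> \<le> pi/2"
    using assms m by (simp add: \<eta>_def) (simp only: \<eta>_def min.cobounded1)
  have "4 * \<eta> * m \<le> 4 * (pi * \<delta> / (2 * (m + 1))) * m"
    using m by (intro mult_right_mono) (auto simp: \<eta>_def)
  also have "\<dots> < \<delta> * (2*pi)"
    using assms m by (simp add: field_simps)
  finally have \<eta>_m: "4 * \<eta> * m < \<delta> * (2*pi)" .
  have "emeasure lebesgue ({v. cos \<eta> < cos (v \<bullet> \<xi> + \<theta>)} \<inter> cball 0 R) < ennreal \<delta>"
    if "r \<le> norm \<xi>" for \<xi> :: 'a and \<theta>
  proof -
    define A where "A = {v. cos \<eta> < cos (v \<bullet> \<xi> + \<theta>)} \<inter> cball 0 R"
    have A_borel: "A \<in> sets borel"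
      unfolding A_def by measurable
    have "emeasure lborel A \<le> emeasure lborel (cball (0::'a) R)"
      by (intro emeasure_mono) (auto simp: A_def)
    then have A_finite: "emeasure lborel A = ennreal (measure lborel A)"
      using emeasure_lborel_cball_finite[of "0::'a" R] by (intro emeasure_eq_ennreal_measure) auto
    have "ennreal (measure lborel A * (2*pi)) \<le> ennreal (4 * \<eta> * m)"
      using emeasure_cos_gt_cball_le[OF \<eta>(1) _ assms(1) that, of \<theta> R] \<eta> m A_finite
      by (simp add: A_def ennreal_mult'[symmetric])
    then have "measure lborel A * (2*pi) \<le> 4 * \<eta> * m"
      using \<eta> m by (subst (asm) ennreal_le_iff) auto
    with \<eta>_m have "measure lborel A * (2*pi) < \<delta> * (2*pi)"
      by linarith
    then have "measure lborel A < \<delta>"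
      by simp
    then show ?thesis
      using A_borel A_finite assms(2) by (simp add: A_def[symmetric] ennreal_lessI)
  qed
  with \<eta> show thesis by (rule that)
qed

lemma integral_mult_ge_off_set:
  fixes g w :: "'a \<Rightarrow> real"
  assumes nonneg: "\<And>x. 0 \<le> g x" and g: "integrable M g"
    and w: "w \<in> borel_measurable M" "\<And>x. 0 \<le> w x" "\<And>x. w x \<le> 1"
    and S: "S \<in> sets M" and off_S: "\<And>x. x \<notin> S \<Longrightarrow> c \<le> w x"
  shows "c * (integral\<^sup>L M g - (\<integral>x. indicator S x * g x \<partial>M)) \<le> (\<integral>x. g x * w x \<partial>M)"
proof -
  have gS: "integrable M (\<lambda>x. indicator S x * g x)"
    using integrable_real_mult_indicator[OF S g] by (simp add: mult.commute)
  have "AE x in M. norm (g x * w x) \<le> norm (g x)"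
    using nonneg w by (intro AE_I2) (simp add: abs_mult mult_left_le)
  with g w have "integrable M (\<lambda>x. g x * w x)"
    by (intro Bochner_Integration.integrable_bound[OF g]) auto
  moreover have "c * (g x - indicator S x * g x) \<le> g x * w x" for x
    using nonneg[of x] w(2)[of x] off_S[of x] mult_right_mono[of c "w x" "g x"]
    by (auto simp: indicator_def mult.commute)
  ultimately have "(\<integral>x. c * (g x - indicator S x * g x) \<partial>M) \<le> (\<integral>x. g x * w x \<partial>M)"
    using g gS by (intro integral_mono) auto
  then show ?thesis
    using g gS by simp
qed

lemma integral_mult_sin_sq_ge:
  fixes g :: "'a::euclidean_space \<Rightarrow> real"
  assumes nonneg: "\<And>v. 0 \<le> g v" and g: "integrable lebesgue g"
  shows "(1 - cos \<eta>) / 2 *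
      (integral\<^sup>L lebesgue g - (\<integral>v. indicator {v. cos \<eta> < cos (v \<bullet> \<xi> + \<theta>)} v * g v \<partial>lebesgue))
    \<le> (\<integral>v. g v * (sin ((v \<bullet> \<xi> + \<theta>) / 2))\<^sup>2 \<partial>lebesgue)"
proof (rule integral_mult_ge_off_set[OF nonneg g])
  show "{v. cos \<eta> < cos (v \<bullet> \<xi> + \<theta>)} \<in> sets lebesgue"
    by (rule sets_completionI_sets) simp
  show "(\<lambda>v. (sin ((v \<bullet> \<xi> + \<theta>) / 2))\<^sup>2) \<in> borel_measurable lebesgue"
    by (rule measurable_completion) simp
  show "(sin ((v \<bullet> \<xi> + \<theta>) / 2))\<^sup>2 \<le> 1" for v
    by (simp add: abs_square_le_1)
  have "(sin (x / 2))\<^sup>2 = (1 - cos x) / 2" for x :: real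
    using cos_double_sin[of "x / 2"] by simp
  then show "(1 - cos \<eta>) / 2 \<le> (sin ((v \<bullet> \<xi> + \<theta>) / 2))\<^sup>2"
    if "v \<notin> {v. cos \<eta> < cos (v \<bullet> \<xi> + \<theta>)}" for v
    using that by simp
qed simp

theorem lemma9:
  fixes g :: "real ^ 3 \<Rightarrow> real"
  assumes nonneg: "\<And>v. g v \<ge> 0"
    and int: "integrable lebesgue g"
    and one: "integral\<^sup>L lebesgue g = 1"
    and r: "r > 0"
  shows "\<exists>C. 0 < C \<and> C < 1/2 \<and>
           (\<forall>\<theta>::real. \<forall>\<xi>::real^3. norm \<xi> > r \<longrightarrow>
              integral\<^sup>L lebesgue (\<lambda>v. g v * (sin ((v \<bullet> \<xi> + \<theta>) / 2))\<^sup>2) \<ge> C)"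
proof -
  obtain R \<delta> where \<delta>: "0 < \<delta>" and small_mass:
    "\<And>A. A \<in> sets lebesgue \<Longrightarrow> emeasure lebesgue (A \<inter> cball 0 R) < ennreal \<delta> \<Longrightarrow>
       (\<integral>v. indicator A v * g v \<partial>lebesgue) < 1/2"
    by (rule small_mass_on_locally_small_sets[OF nonneg int, of "1/2"]) (simp, blast)
  obtain \<eta> where \<eta>: "0 < \<eta>" "\<eta> \<le> pi/2" and thin:
    "\<And>(\<xi>::real^3) \<theta>. r \<le> norm \<xi> \<Longrightarrow>
       emeasure lebesgue ({v. cos \<eta> < cos (v \<bullet> \<xi> + \<theta>)} \<inter> cball 0 R) < ennreal \<delta>"
    using emeasure_cos_gt_cball_small[OF r \<delta>] by blast
  define c where "c = (1 - cos \<eta>) / 2"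
  have c: "0 < c" "c \<le> 1/2"
    using \<eta> cos_monotone_0_pi[of 0 \<eta>] cos_ge_zero[of \<eta>] by (auto simp: c_def)
  show ?thesis
  proof (intro exI[of _ "c/2"] conjI allI impI)
    fix \<theta> :: real and \<xi> :: "real^3"
    assume "r < norm \<xi>"
    let ?S = "{v. cos \<eta> < cos (v \<bullet> \<xi> + \<theta>)}"
    have "?S \<in> sets lebesgue"
      by (rule sets_completionI_sets) simp
    with \<open>r < norm \<xi>\<close> have "(\<integral>v. indicator ?S v * g v \<partial>lebesgue) < 1/2"
      by (intro small_mass thin) simp_all
    with one c have "c * (1/2) \<le> c * (integral\<^sup>L lebesgue g - (\<integral>v. indicator ?S v * g v \<partial>lebesgue))"
      by (intro mult_left_mono) simp_all
    also have "\<dots> \<le> (\<integral>v. g v * (sin ((v \<bullet> \<xi> + \<theta>) / 2))\<^sup>2 \<partial>lebesgue)"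
      unfolding c_def by (rule integral_mult_sin_sq_ge[OF nonneg int])
    finally show "c/2 \<le> (\<integral>v. g v * (sin ((v \<bullet> \<xi> + \<theta>) / 2))\<^sup>2 \<partial>lebesgue)"
      by simp
  qed (use c in simp_all)
qed

end
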